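(* For an auto-regressive generative model producing its output over $R$ rounds with per-round models $h_1,\dots,h_R$, the cumulative error satisfies \[ L(h_R) := \sum_{r=1}^{R}\lambda_r L_{r}(h_{r}) \leq \sum_{i=1}^R \Lambda_i \left( \hat{L}_{m,i}(h_{i}) + \epsilon_i \right), \] where $G_{r,i}=\lambda_r\prod_{j=i+1}^{r}\gamma_j$ and $\Lambda_i=\sum_{r=i}^{R}G_{r,i}$.
   Context: For round $r$, $L_r(h_r)=\mathbb{E}_{(x^{(r)},y^{(r)})\sim\mathcal{D}^{(r)}}[\ell(h_r(x^{(r)}),y^{(r)})]$ is the expected loss of the round-$r$ output with respect to the expected output, $\hat{L}_{m,r}(h_r)$ is the empirical loss computed on $m$ samples, and $\epsilon_r\ge0$ is the generalization term of round $r$. The constants $\gamma_r\ge 0$ quantify the impact of errors from round $r-1$ on round $r$, in the sense that $L_r(h_r)\le \hat{L}_{m,r}(h_r)+\epsilon_r+\gamma_r L_{r-1}(h_{r-1})$ for each $r$ (with no previous-round term for $r=1$). The weights $\lambda_r\ge 0$ satisfy $\sum_{r=1}^R\lambda_r=1$. Empty products equal $1$. *)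

theory Defs
  imports "HOL-Analysis.Analysis"
begin

end

theory Submission
  imports Defs
begin

text \<open>
  Unrolling the one-step recursion \<open>L r \<le> e r + \<gamma> r * L (r - 1)\<close>, where
  \<open>e i = Lhat i + \<epsilon> i\<close>, bounds each round loss by
  \<open>\<Sum>i=1..r. (\<Prod>j=i+1..r. \<gamma> j) * e i\<close>; this uses \<open>\<gamma> \<ge> 0\<close>, so that
  multiplying by \<open>\<gamma> r\<close> preserves the bound. Weighting by \<open>\<lambda> r \<ge> 0\<close> and
  exchanging the order of the triangular double sum gives the claim.
\<close>

lemma sum_triangle_swap:
  fixes f :: "nat \<Rightarrow> nat \<Rightarrow> 'a::comm_monoid_add"
  shows "(\<Sum>r=1..n. \<Sum>i=1..r. f r i) = (\<Sum>i=1..n. \<Sum>r=i..n. f r i)"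
proof -
  have "(\<Sum>r=1..n. \<Sum>i=1..r. f r i) = (\<Sum>r=1..n. \<Sum>i\<in>{i \<in> {1..n}. i \<le> r}. f r i)"
    by (intro sum.cong) auto
  also have "\<dots> = (\<Sum>i=1..n. \<Sum>r\<in>{r \<in> {1..n}. i \<le> r}. f r i)"
    by (rule sum.swap_restrict) simp_all
  also have "\<dots> = (\<Sum>i=1..n. \<Sum>r=i..n. f r i)"
    by (intro sum.cong) auto
  finally show ?thesis .
qed

lemma le_sum_prod_of_linear_recursion:
  fixes x e g :: "nat \<Rightarrow> 'a::{ordered_comm_semiring, comm_semiring_1}"
  assumes g_nonneg: "\<And>r. 2 \<le> r \<Longrightarrow> r \<le> n \<Longrightarrow> 0 \<le> g r"
    and first: "x 1 \<le> e 1"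
    and recursion: "\<And>r. 2 \<le> r \<Longrightarrow> r \<le> n \<Longrightarrow> x r \<le> e r + g r * x (r - 1)"
    and "1 \<le> r" "r \<le> n"
  shows "x r \<le> (\<Sum>i=1..r. (\<Prod>j=i+1..r. g j) * e i)"
  using \<open>1 \<le> r\<close> \<open>r \<le> n\<close>
proof (induction r rule: dec_induct)
  case base
  then show ?case using first by simp
next
  case (step r)
  have "x (Suc r) \<le> e (Suc r) + g (Suc r) * x r"
    using recursion[of "Suc r"] step by simp
  also have "\<dots> \<le> e (Suc r) + g (Suc r) * (\<Sum>i=1..r. (\<Prod>j=i+1..r. g j) * e i)"
    using step g_nonneg[of "Suc r"] by (simp add: add_left_mono mult_left_mono)
  also have "g (Suc r) * (\<Sum>i=1..r. (\<Prod>j=i+1..r. g j) * e i)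
      = (\<Sum>i=1..r. (\<Prod>j=i+1..Suc r. g j) * e i)"
    unfolding sum_distrib_left
    by (intro sum.cong) (auto simp: prod.nat_ivl_Suc' mult_ac)
  finally show ?case by (simp add: add.commute)
qed

theorem theorem6p2:
  fixes R :: nat
    and h :: "nat \<Rightarrow> 'h"
    and L :: "nat \<Rightarrow> 'h \<Rightarrow> real"
    and Lhat :: "nat \<Rightarrow> 'h \<Rightarrow> real"
    and eps gam lam :: "nat \<Rightarrow> real"
  assumes eps_nonneg: "\<And>r. 1 \<le> r \<Longrightarrow> r \<le> R \<Longrightarrow> eps r \<ge> 0"
    and gamma_nonneg: "\<And>r. 1 \<le> r \<Longrightarrow> r \<le> R \<Longrightarrow> gam r \<ge> 0"
    and lambda_nonneg: "\<And>r. 1 \<le> r \<Longrightarrow> r \<le> R \<Longrightarrow> lam r \<ge> 0"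
    and lambda_sum: "(\<Sum>r=1..R. lam r) = 1"
    and first_round: "1 \<le> R \<Longrightarrow> L 1 (h 1) \<le> Lhat 1 (h 1) + eps 1"
    and later_rounds: "\<And>r. 2 \<le> r \<Longrightarrow> r \<le> R \<Longrightarrow>
        L r (h r) \<le> Lhat r (h r) + eps r + gam r * L (r - 1) (h (r - 1))"
  shows "(\<Sum>r=1..R. lam r * L r (h r))
         \<le> (\<Sum>i=1..R. (\<Sum>r=i..R. lam r * (\<Prod>j=i+1..r. gam j)) * (Lhat i (h i) + eps i))"
proof -
  define e where "e i = Lhat i (h i) + eps i" for i
  have round_bound: "L r (h r) \<le> (\<Sum>i=1..r. (\<Prod>j=i+1..r. gam j) * e i)"
    if "1 \<le> r" "r \<le> R" for r
    using that first_round later_rounds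
    by (intro le_sum_prod_of_linear_recursion[where x = "\<lambda>r. L r (h r)" and n = R])
      (auto simp: e_def gamma_nonneg)
  have "(\<Sum>r=1..R. lam r * L r (h r))
      \<le> (\<Sum>r=1..R. \<Sum>i=1..r. lam r * (\<Prod>j=i+1..r. gam j) * e i)"
    unfolding sum_distrib_left[symmetric] mult.assoc
    by (intro sum_mono mult_left_mono round_bound lambda_nonneg) auto
  also have "\<dots> = (\<Sum>i=1..R. (\<Sum>r=i..R. lam r * (\<Prod>j=i+1..r. gam j)) * e i)"
    by (subst sum_triangle_swap) (simp add: sum_distrib_right)
  finally show ?thesis by (simp add: e_def)
qed

end
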